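(* Let $\mathcal{L}$ be a set of lines of $\mathsf{PG}(7,q^3)$ satisfying (Pt): every point of $\mathsf{PG}(7,q^3)$ is incident with $0$ or $q+1$ elements of $\mathcal{L}$; (Pl): every plane contains $0$, $1$ or $q+1$ elements of $\mathcal{L}$; and (Sd): every solid contains $0,1,q+1$ or $2q+1$ elements of $\mathcal{L}$. Then no three lines of $\mathcal{L}$ form a triangle and no four lines of $\mathcal{L}$ form a quadrangle.
   Context: A triangle (resp. quadrangle) is a set of $3$ (resp. $4$) lines $L_1,\dots,L_k$ such that $L_i$ meets $L_{i+1}$ (indices mod $k$) and the $k$ intersection points are pairwise distinct. *)

theory Defs
  imports "HOL-Analysis.Analysis" "HOL-Library.Numeral_Type"
begin

text \<open>The projective space PG(7,K) is modelled by the vector space K^8; a projective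
 subspace of projective dimension d is a linear subspace of K^8 of vector dimension d+1.\<close>

definition psub :: "nat \<Rightarrow> ('k::field ^ 8) set \<Rightarrow> bool" where
  "psub d U \<longleftrightarrow> vec.subspace U \<and> vec.dim U = d + 1"

abbreviation "is_point U \<equiv> psub 0 U"
abbreviation "is_line U \<equiv> psub 1 U"
abbreviation "is_plane U \<equiv> psub 2 U"
abbreviation "is_solid U \<equiv> psub 3 U"

definition is_polygon :: "nat \<Rightarrow> (nat \<Rightarrow> ('k::field ^ 8) set) \<Rightarrow> bool" where
  "is_polygon k L \<longleftrightarrow>
     (\<forall>i<k. is_line (L i)) \<and> inj_on L {..<k} \<and>
     (\<forall>i<k. is_point (L i \<inter> L (Suc i mod k))) \<and>
     inj_on (\<lambda>i. L i \<inter> L (Suc i mod k)) {..<k}"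

end

theory Submission
  imports Defs
begin

text \<open>
  Let \<open>L\<^sub>0, L\<^sub>1 \<in> \<L>\<close> meet in a point \<open>p\<close> and span the plane \<open>\<pi>\<close>. Every line \<open>m \<in> \<L>\<close>
  through \<open>p\<close> lies in \<open>\<pi>\<close>: otherwise the three distinct planes \<open>\<langle>L\<^sub>0,L\<^sub>1\<rangle>\<close>, \<open>\<langle>L\<^sub>0,m\<rangle>\<close>,
  \<open>\<langle>L\<^sub>1,m\<rangle>\<close> lie in the solid \<open>\<langle>\<pi>,m\<rangle>\<close>, each contains \<open>q + 1\<close> lines of \<open>\<L>\<close> by (Pl), and two
  of them share at most one line, so the solid contains at least \<open>3q > 2q + 1\<close> lines of \<open>\<L>\<close>,
  against (Sd). By (Pt) and (Pl) both sets have \<open>q + 1\<close> elements, so the lines of \<open>\<L>\<close> in \<open>\<pi>\<close>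
  are exactly those through \<open>p\<close>. Hence no three consecutive sides of a polygon in \<open>\<L>\<close> are
  coplanar. This rules out triangles, and the sides of a quadrangle then span a solid
  containing the pencils of \<open>\<L>\<close> at three vertices: again \<open>3(q + 1)\<close> lines, pairwise sharing at
  most one. Note \<open>q \<ge> 2\<close>, as \<open>q\<^sup>3\<close> is the order of a field.

  The join of two projective subspaces is the sum \<open>U + V\<close> of the underlying linear subspaces.
\<close>

lemma set_plus_eq_sums: "S + T = {x + y |x y. x \<in> S \<and> y \<in> T}"
  by (auto simp: set_plus_def)

context vector_space
begin

lemma subspace_set_plus: "subspace S \<Longrightarrow> subspace T \<Longrightarrow> subspace (S + T)"
  unfolding set_plus_eq_sums by (rule subspace_sums)

lemma set_plus_subset_subspace: "subspace W \<Longrightarrow> S \<subseteq> W \<Longrightarrow> T \<subseteq> W \<Longrightarrow> S + T \<subseteq> W"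
  by (auto simp: set_plus_def intro: subspace_add)

lemma subset_set_plus_left: "subspace T \<Longrightarrow> S \<subseteq> S + T"
  using subspace_0 by (force simp: set_plus_def)

lemma subset_set_plus_right: "subspace S \<Longrightarrow> T \<subseteq> S + T"
  using subspace_0 by (force simp: set_plus_def)

end

context finite_dimensional_vector_space
begin

lemma dim_set_plus_Int:
  "subspace S \<Longrightarrow> subspace T \<Longrightarrow> dim (S + T) + dim (S \<inter> T) = dim S + dim T"
  unfolding set_plus_eq_sums by (rule dim_sums_Int)

lemma dim_Int_less:
  assumes "subspace S" "subspace T" "\<not> S \<subseteq> T"
  shows "dim (S \<inter> T) < dim S"
proof -
  have "dim (S \<inter> T) \<noteq> dim S"
    using subspace_dim_equal[of "S \<inter> T" S] assms by (auto simp: subspace_inter)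
  then show ?thesis
    using dim_subset[of "S \<inter> T" S] by simp
qed

end

lemma psub_subset_imp_eq: "psub d U \<Longrightarrow> psub d V \<Longrightarrow> U \<subseteq> V \<Longrightarrow> U = V"
  unfolding psub_def by (simp add: vec.subspace_dim_equal)

lemma line_Int_eq_point:
  assumes "is_line l" "vec.subspace V" "\<not> l \<subseteq> V" "is_point p" "p \<subseteq> l" "p \<subseteq> V"
  shows "V \<inter> l = p"
proof -
  have "vec.dim (l \<inter> V) < 2"
    using vec.dim_Int_less[of l V] assms by (simp add: psub_def)
  moreover have "vec.dim p \<le> vec.dim (V \<inter> l)"
    using assms by (intro vec.dim_subset) auto
  ultimately have "vec.dim (V \<inter> l) \<le> vec.dim p"
    using assms by (simp add: psub_def Int_commute)
  then show ?thesis
    using vec.subspace_dim_equal[of p "V \<inter> l"] assms by (simp add: psub_def vec.subspace_inter)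
qed

lemma psub_join_line:
  assumes "psub d V" "is_line l" "is_point (V \<inter> l)"
  shows "psub (d + 1) (V + l)"
  using assms vec.dim_set_plus_Int[of V l] by (simp add: psub_def vec.subspace_set_plus)

lemma is_plane_join: "is_line l0 \<Longrightarrow> is_line l1 \<Longrightarrow> is_point (l0 \<inter> l1) \<Longrightarrow> is_plane (l0 + l1)"
  using psub_join_line[of 1 l0 l1] by (simp add: psub_def)

lemma is_solid_join:
  assumes "is_plane \<pi>" "is_line l" "\<not> l \<subseteq> \<pi>" "is_point p" "p \<subseteq> l" "p \<subseteq> \<pi>"
  shows "is_solid (\<pi> + l)"
proof -
  have "\<pi> \<inter> l = p"
    using line_Int_eq_point[OF assms(2) _ assms(3-6)] assms(1) by (simp add: psub_def)
  then show ?thesis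
    using psub_join_line[of 2 \<pi> l] assms by (simp add: psub_def)
qed

lemma line_subset_subspace:
  assumes l: "is_line l" and a: "is_point a" "a \<subseteq> l" and b: "is_point b" "b \<subseteq> l" "a \<noteq> b"
    and W: "vec.subspace W" "a \<subseteq> W" "b \<subseteq> W"
  shows "l \<subseteq> W"
proof -
  have sa: "vec.subspace a" and sb: "vec.subspace b"
    using a b by (simp_all add: psub_def)
  have "\<not> a \<subseteq> b"
    using psub_subset_imp_eq a b by blast
  then have "vec.dim (a \<inter> b) < vec.dim a"
    using vec.dim_Int_less[OF sa sb] by simp
  then have "is_line (a + b)"
    using vec.dim_set_plus_Int[OF sa sb] a b unfolding psub_def
    by (simp add: vec.subspace_set_plus del: vec.dim_eq_0)
  moreover have "a + b \<subseteq> l"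
    using l a b by (simp add: psub_def vec.set_plus_subset_subspace)
  ultimately have "l = a + b"
    using psub_subset_imp_eq l by blast
  then show ?thesis
    using W by (simp add: vec.set_plus_subset_subspace)
qed

lemma line_eq_if_two_points:
  assumes "is_line l" "is_line l'" "is_point a" "is_point b" "a \<noteq> b"
    and "a \<subseteq> l" "b \<subseteq> l" "a \<subseteq> l'" "b \<subseteq> l'"
  shows "l = l'"
  using line_subset_subspace[of l a b l'] psub_subset_imp_eq[of 1 l l'] assms
  by (simp add: psub_def)

lemma plane_eq_if_two_lines:
  assumes P: "is_plane P" and Q: "is_plane Q" and l: "is_line l" "l \<subseteq> P" "l \<subseteq> Q"
    and l': "is_line l'" "l' \<subseteq> P" "l' \<subseteq> Q" "l \<noteq> l'"
  shows "P = Q"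
proof -
  have "\<not> l \<subseteq> l'"
    using psub_subset_imp_eq l l' by blast
  then have "vec.dim (l \<inter> l') < 2"
    using vec.dim_Int_less[of l l'] l l' by (simp add: psub_def)
  then have "3 \<le> vec.dim (l + l')"
    using vec.dim_set_plus_Int[of l l'] l l' by (simp add: psub_def)
  moreover have "vec.subspace (l + l')"
    using l l' by (simp add: psub_def vec.subspace_set_plus)
  moreover have "l + l' \<subseteq> P" "l + l' \<subseteq> Q"
    using P Q l l' by (simp_all add: psub_def vec.set_plus_subset_subspace)
  ultimately show ?thesis
    using vec.subspace_dim_equal[of "l + l'" P] vec.subspace_dim_equal[of "l + l'" Q] P Q
    by (simp add: psub_def)
qed

lemma join_ne_if_not_subset:
  assumes UV: "psub d (U + V)" and UW: "psub d (U + W)"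
    and s: "vec.subspace U" "vec.subspace V" "vec.subspace W" and W_out: "\<not> W \<subseteq> U + V"
  shows "U + W \<noteq> V + W"
proof
  assume eq: "U + W = V + W"
  have "U \<subseteq> U + W" "V \<subseteq> U + W"
    using vec.subset_set_plus_left[OF s(3), of U] vec.subset_set_plus_left[OF s(3), of V] eq by simp_all
  then have "U + V = U + W"
    using psub_subset_imp_eq[OF UV UW] UW by (simp add: psub_def vec.set_plus_subset_subspace)
  then show False
    using vec.subset_set_plus_right[OF s(1), of W] W_out by simp
qed

lemma is_polygon_vertex:
  "is_polygon k L \<Longrightarrow> i < k \<Longrightarrow> j = Suc i mod k \<Longrightarrow> is_point (L i \<inter> L j)"
  unfolding is_polygon_def by blast

lemma is_polygon_vertices_distinct:
  assumes "is_polygon k L" "i < k" "i' = Suc i mod k" "j < k" "j' = Suc j mod k" "i \<noteq> j"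
  shows "L i \<inter> L i' \<noteq> L j \<inter> L j'"
  using assms unfolding is_polygon_def by (auto dest: inj_onD)

lemma card_Un3_ge:
  assumes "finite A" "finite B" "finite C"
  shows "card A + card B + card C
    \<le> card (A \<union> B \<union> C) + card (A \<inter> B) + card (A \<inter> C) + card (B \<inter> C)"
proof -
  have "card ((A \<union> B) \<inter> C) \<le> card (A \<inter> C) + card (B \<inter> C)"
    by (metis Int_Un_distrib2 card_Un_le)
  then show ?thesis
    using card_Un_Int[of A B] card_Un_Int[of "A \<union> B" C] assms by simp
qed

locale pt_pl_sd_lines =
  fixes q :: nat and \<L> :: "('k::{field,finite} ^ 8) set set"
  assumes card_field: "CARD('k) = q ^ 3"
    and lines: "\<forall>l\<in>\<L>. is_line l"
    and Pt: "\<forall>p. is_point p \<longrightarrow> card {l\<in>\<L>. p \<subseteq> l} \<in> {0, q + 1}"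
    and Pl: "\<forall>\<pi>. is_plane \<pi> \<longrightarrow> card {l\<in>\<L>. l \<subseteq> \<pi>} \<in> {0, 1, q + 1}"
    and Sd: "\<forall>S. is_solid S \<longrightarrow> card {l\<in>\<L>. l \<subseteq> S} \<in> {0, 1, q + 1, 2 * q + 1}"
begin

abbreviation lines_through :: "('k ^ 8) set \<Rightarrow> ('k ^ 8) set set"
  where "lines_through p \<equiv> {l\<in>\<L>. p \<subseteq> l}"

abbreviation lines_in :: "('k ^ 8) set \<Rightarrow> ('k ^ 8) set set"
  where "lines_in U \<equiv> {l\<in>\<L>. l \<subseteq> U}"

lemma q_ge_2: "2 \<le> q"
proof (rule ccontr)
  assume "\<not> 2 \<le> q"
  then have "q ^ 3 \<le> 1"
    using power_le_one[of q 3] by simp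
  moreover have "card {0::'k, 1} \<le> CARD('k)"
    by (rule card_mono) auto
  ultimately show False
    using card_field by simp
qed

lemma card_lines_through:
  assumes "is_point p" "l \<in> \<L>" "p \<subseteq> l"
  shows "card (lines_through p) = q + 1"
proof -
  have "card (lines_through p) \<noteq> 0"
    using assms by auto
  then show ?thesis
    using Pt assms(1) by auto
qed

lemma card_lines_in_plane:
  assumes "is_plane \<pi>" "l \<in> \<L>" "l' \<in> \<L>" "l \<noteq> l'" "l \<subseteq> \<pi>" "l' \<subseteq> \<pi>"
  shows "card (lines_in \<pi>) = q + 1"
proof -
  have "card {l, l'} \<le> card (lines_in \<pi>)"
    using assms by (intro card_mono) auto
  then show ?thesis
    using Pl assms by auto
qed

lemma card_lines_in_join:
  assumes L0: "L0 \<in> \<L>" and L1: "L1 \<in> \<L>" and p: "is_point (L0 \<inter> L1)"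
  shows "card (lines_in (L0 + L1)) = q + 1"
proof -
  have l: "is_line L0" "is_line L1"
    using L0 L1 lines by simp_all
  then have "is_plane (L0 + L1)"
    using is_plane_join p by blast
  moreover have "L0 \<noteq> L1"
    using l p by (auto simp: psub_def)
  moreover have "L0 \<subseteq> L0 + L1" "L1 \<subseteq> L0 + L1"
    using l by (simp_all add: psub_def vec.subset_set_plus_left vec.subset_set_plus_right)
  ultimately show ?thesis
    using card_lines_in_plane L0 L1 by blast
qed

lemma card_lines_in_solid_le:
  assumes "is_solid S"
  shows "card (lines_in S) \<le> 2 * q + 1"
proof -
  have "\<forall>n \<in> {0, 1, q + 1, 2 * q + 1}. n \<le> 2 * q + 1"
    by simp
  then show ?thesis
    using Sd assms by blast
qed

lemma card_lines_through_Int_le_1: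
  assumes "is_point a" "is_point b" "a \<noteq> b"
  shows "card (lines_through a \<inter> lines_through b) \<le> 1"
  using assms lines line_eq_if_two_points[of _ _ a b] by (auto simp: card_le_Suc0_iff_eq)

lemma card_lines_in_Int_le_1:
  assumes "is_plane \<pi>" "is_plane \<sigma>" "\<pi> \<noteq> \<sigma>"
  shows "card (lines_in \<pi> \<inter> lines_in \<sigma>) \<le> 1"
proof -
  have "l = l'" if "l \<in> lines_in \<pi> \<inter> lines_in \<sigma>" "l' \<in> lines_in \<pi> \<inter> lines_in \<sigma>" for l l'
    using that assms lines plane_eq_if_two_lines[of \<pi> \<sigma> l l'] by auto
  then show ?thesis
    by (simp add: card_le_Suc0_iff_eq)
qed

lemma solid_not_three_families:
  assumes "is_solid S" "A \<subseteq> lines_in S" "B \<subseteq> lines_in S" "C \<subseteq> lines_in S"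
    and "card A = q + 1" "card B = q + 1" "card C = q + 1"
    and "card (A \<inter> B) \<le> 1" "card (A \<inter> C) \<le> 1" "card (B \<inter> C) \<le> 1"
  shows False
proof -
  have "card (A \<union> B \<union> C) \<le> card (lines_in S)"
    using assms(2-4) by (intro card_mono) auto
  moreover have "card A + card B + card C
      \<le> card (A \<union> B \<union> C) + card (A \<inter> B) + card (A \<inter> C) + card (B \<inter> C)"
    by (rule card_Un3_ge) simp_all
  ultimately show False
    using card_lines_in_solid_le[OF assms(1)] q_ge_2 assms(5-10) by linarith
qed

lemma lines_through_subset_join:
  assumes L0: "L0 \<in> \<L>" and L1: "L1 \<in> \<L>" and p: "is_point (L0 \<inter> L1)"
  shows "lines_through (L0 \<inter> L1) \<subseteq> lines_in (L0 + L1)"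
proof (rule ccontr)
  let ?p = "L0 \<inter> L1"
  assume "\<not> ?thesis"
  then obtain m where m: "m \<in> \<L>" "?p \<subseteq> m" and m_out: "\<not> m \<subseteq> L0 + L1"
    by blast
  have l: "is_line L0" "is_line L1" "is_line m"
    using L0 L1 m lines by auto
  then have s: "vec.subspace L0" "vec.subspace L1" "vec.subspace m"
    by (simp_all add: psub_def)
  have in01: "L0 \<subseteq> L0 + L1" "L1 \<subseteq> L0 + L1"
    using s by (simp_all add: vec.subset_set_plus_left vec.subset_set_plus_right)
  have "L0 \<inter> m = ?p" "L1 \<inter> m = ?p"
    using line_Int_eq_point[of m _ ?p] l s p m m_out in01 by auto
  then have planes: "is_plane (L0 + L1)" "is_plane (L0 + m)" "is_plane (L1 + m)"
    and cards: "card (lines_in (L0 + L1)) = q + 1" "card (lines_in (L0 + m)) = q + 1"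
      "card (lines_in (L1 + m)) = q + 1"
    using is_plane_join[OF l(1,2)] is_plane_join[OF l(1,3)] is_plane_join[OF l(2,3)]
      card_lines_in_join L0 L1 m p by simp_all
  define S where "S = L0 + L1 + m"
  have "is_solid S"
    unfolding S_def using is_solid_join[OF planes(1) l(3) m_out p m(2)] in01 by blast
  have "L0 + L1 \<subseteq> S" "L0 + m \<subseteq> S" "L1 + m \<subseteq> S"
    using vec.subset_set_plus_left[OF s(3)] set_plus_mono2[OF in01(1) subset_refl]
      set_plus_mono2[OF in01(2) subset_refl] by (simp_all add: S_def)
  have m_in: "m \<subseteq> L0 + m" "m \<subseteq> L1 + m"
    using s by (simp_all add: vec.subset_set_plus_right)
  then have "L0 + L1 \<noteq> L0 + m" "L0 + L1 \<noteq> L1 + m"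
    using m_out by auto
  moreover have "L0 + m \<noteq> L1 + m"
    using join_ne_if_not_subset[OF planes(1,2) s m_out] .
  ultimately show False
    using solid_not_three_families[OF \<open>is_solid S\<close>, of "lines_in (L0 + L1)" "lines_in (L0 + m)"
        "lines_in (L1 + m)"] cards card_lines_in_Int_le_1 planes
      \<open>L0 + L1 \<subseteq> S\<close> \<open>L0 + m \<subseteq> S\<close> \<open>L1 + m \<subseteq> S\<close>
    by blast
qed

lemma lines_in_join_eq_lines_through:
  assumes "L0 \<in> \<L>" "L1 \<in> \<L>" "is_point (L0 \<inter> L1)"
  shows "lines_in (L0 + L1) = lines_through (L0 \<inter> L1)"
proof -
  have "card (lines_through (L0 \<inter> L1)) = card (lines_in (L0 + L1))"
    using card_lines_through[OF assms(3,1)] card_lines_in_join[OF assms] by simp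
  then show ?thesis
    using card_subset_eq[OF _ lines_through_subset_join[OF assms]] by simp
qed

lemma lines_through_subset_lines_in:
  assumes "L0 \<in> \<L>" "L1 \<in> \<L>" "is_point (L0 \<inter> L1)" "vec.subspace S" "L0 \<subseteq> S" "L1 \<subseteq> S"
  shows "lines_through (L0 \<inter> L1) \<subseteq> lines_in S"
  using lines_through_subset_join[OF assms(1-3)] vec.set_plus_subset_subspace[OF assms(4-6)]
  by blast

lemma coplanar_sides_vertex_eq:
  assumes "L0 \<in> \<L>" "L1 \<in> \<L>" "L2 \<in> \<L>" "is_point (L0 \<inter> L1)" "is_point (L1 \<inter> L2)"
    and "L2 \<subseteq> L0 + L1"
  shows "L0 \<inter> L1 = L1 \<inter> L2"
proof -
  have "L0 \<inter> L1 \<subseteq> L1 \<inter> L2"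
    using lines_in_join_eq_lines_through[of L0 L1] assms by blast
  then show ?thesis
    using psub_subset_imp_eq assms by blast
qed

lemma path_not_in_solid:
  assumes "is_solid S" "L0 \<in> \<L>" "L1 \<in> \<L>" "L2 \<in> \<L>" "L3 \<in> \<L>"
    and "is_point (L0 \<inter> L1)" "is_point (L1 \<inter> L2)" "is_point (L2 \<inter> L3)"
    and "L0 \<inter> L1 \<noteq> L1 \<inter> L2" "L0 \<inter> L1 \<noteq> L2 \<inter> L3" "L1 \<inter> L2 \<noteq> L2 \<inter> L3"
    and "L0 \<subseteq> S" "L1 \<subseteq> S" "L2 \<subseteq> S" "L3 \<subseteq> S"
  shows False
proof (rule solid_not_three_families[OF assms(1)])
  have "vec.subspace S"
    using assms(1) by (simp add: psub_def)
  then show "lines_through (L0 \<inter> L1) \<subseteq> lines_in S" "lines_through (L1 \<inter> L2) \<subseteq> lines_in S"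
      "lines_through (L2 \<inter> L3) \<subseteq> lines_in S"
    using lines_through_subset_lines_in assms(2-8,12-15) by simp_all
  show "card (lines_through (L0 \<inter> L1)) = q + 1" "card (lines_through (L1 \<inter> L2)) = q + 1"
      "card (lines_through (L2 \<inter> L3)) = q + 1"
    using card_lines_through assms(2-8) by (meson Int_lower1)+
  show "card (lines_through (L0 \<inter> L1) \<inter> lines_through (L1 \<inter> L2)) \<le> 1"
      "card (lines_through (L0 \<inter> L1) \<inter> lines_through (L2 \<inter> L3)) \<le> 1"
      "card (lines_through (L1 \<inter> L2) \<inter> lines_through (L2 \<inter> L3)) \<le> 1"
    using card_lines_through_Int_le_1 assms(6-11) by simp_all
qed

lemma no_triangle:
  assumes "\<forall>i<3. L i \<in> \<L>" and poly: "is_polygon 3 L"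
  shows False
proof -
  have L: "L 0 \<in> \<L>" "L 1 \<in> \<L>" "L 2 \<in> \<L>"
    using assms(1) by simp_all
  then have s: "vec.subspace (L 0)" "vec.subspace (L 1)"
    using lines by (simp_all add: psub_def)
  have vertices: "is_point (L 0 \<inter> L 1)" "is_point (L 1 \<inter> L 2)" "is_point (L 2 \<inter> L 0)"
    by (rule is_polygon_vertex[OF poly]; simp)+
  have "L 2 \<subseteq> L 0 + L 1"
  proof (rule line_subset_subspace)
    show "L 1 \<inter> L 2 \<noteq> L 2 \<inter> L 0"
      by (rule is_polygon_vertices_distinct[OF poly]) simp_all
    show "vec.subspace (L 0 + L 1)" "L 1 \<inter> L 2 \<subseteq> L 0 + L 1" "L 2 \<inter> L 0 \<subseteq> L 0 + L 1"
      using s vec.subset_set_plus_left[of "L 1" "L 0"] vec.subset_set_plus_right[of "L 0" "L 1"]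
      by (auto simp: vec.subspace_set_plus)
  qed (use L lines vertices in auto)
  then have "L 0 \<inter> L 1 = L 1 \<inter> L 2"
    using coplanar_sides_vertex_eq L vertices by simp
  moreover have "L 0 \<inter> L 1 \<noteq> L 1 \<inter> L 2"
    by (rule is_polygon_vertices_distinct[OF poly]) simp_all
  ultimately show False
    by contradiction
qed

lemma no_quadrangle:
  assumes "\<forall>i<4. L i \<in> \<L>" and poly: "is_polygon 4 L"
  shows False
proof -
  have L: "L 0 \<in> \<L>" "L 1 \<in> \<L>" "L 2 \<in> \<L>" "L 3 \<in> \<L>"
    using assms(1) by simp_all
  then have l: "is_line (L 0)" "is_line (L 1)" "is_line (L 2)" "is_line (L 3)"
    using lines by simp_all
  then have s: "vec.subspace (L 0)" "vec.subspace (L 1)" "vec.subspace (L 2)"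
    by (simp_all add: psub_def)
  have vertices: "is_point (L 0 \<inter> L 1)" "is_point (L 1 \<inter> L 2)"
      "is_point (L 2 \<inter> L 3)" "is_point (L 3 \<inter> L 0)"
    by (rule is_polygon_vertex[OF poly]; simp)+
  have distinct: "L 0 \<inter> L 1 \<noteq> L 1 \<inter> L 2" "L 0 \<inter> L 1 \<noteq> L 2 \<inter> L 3"
      "L 1 \<inter> L 2 \<noteq> L 2 \<inter> L 3" "L 2 \<inter> L 3 \<noteq> L 3 \<inter> L 0"
    by (rule is_polygon_vertices_distinct[OF poly]; simp)+
  have in01: "L 0 \<subseteq> L 0 + L 1" "L 1 \<subseteq> L 0 + L 1"
    using vec.subset_set_plus_left[OF s(2)] vec.subset_set_plus_right[OF s(1)] by simp_all
  have "\<not> L 2 \<subseteq> L 0 + L 1"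
    using coplanar_sides_vertex_eq[OF L(1-3) vertices(1,2)] distinct(1) by blast
  define S where "S = L 0 + L 1 + L 2"
  have "is_solid S"
    unfolding S_def using is_solid_join[OF is_plane_join[OF l(1,2) vertices(1)] l(3)
        \<open>\<not> L 2 \<subseteq> L 0 + L 1\<close> vertices(2)] in01 by blast
  then have sS: "vec.subspace S"
    by (simp add: psub_def)
  have "L 0 + L 1 \<subseteq> S" "L 2 \<subseteq> S"
    using vec.subset_set_plus_left[OF s(3)] vec.subset_set_plus_right[OF vec.subspace_set_plus[OF s(1,2)]]
    by (simp_all add: S_def)
  then have in_S: "L 0 \<subseteq> S" "L 1 \<subseteq> S" "L 2 \<subseteq> S"
    using in01 by blast+
  moreover have "L 3 \<subseteq> S"
    by (rule line_subset_subspace[OF l(4) vertices(3) _ vertices(4) _ distinct(4) sS]) (use in_S in auto)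
  ultimately show False
    using path_not_in_solid[OF \<open>is_solid S\<close> L vertices(1-3) distinct(1-3)] by blast
qed

end

theorem mainTheorem17:
  fixes q :: nat and \<L> :: "('k::{field,finite} ^ 8) set set"
  assumes card_field: "CARD('k) = q ^ 3"
    and lines: "\<forall>l\<in>\<L>. is_line l"
    and Pt: "\<forall>p. is_point p \<longrightarrow> card {l\<in>\<L>. p \<subseteq> l} \<in> {0, q + 1}"
    and Pl: "\<forall>\<pi>. is_plane \<pi> \<longrightarrow> card {l\<in>\<L>. l \<subseteq> \<pi>} \<in> {0, 1, q + 1}"
    and Sd: "\<forall>S. is_solid S \<longrightarrow> card {l\<in>\<L>. l \<subseteq> S} \<in> {0, 1, q + 1, 2 * q + 1}"
  shows "\<not> (\<exists>L. (\<forall>i<3. L i \<in> \<L>) \<and> is_polygon 3 L)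
       \<and> \<not> (\<exists>L. (\<forall>i<4. L i \<in> \<L>) \<and> is_polygon 4 L)"
proof -
  interpret pt_pl_sd_lines q \<L>
    using assms by unfold_locales
  show ?thesis
    using no_triangle no_quadrangle by blast
qed

end
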